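(* Let $n\ge 4$ and $1\le k<\frac{n}{2}$ be integers. If $n\neq 2k+1$, then $\mathrm{Aut}(B(n,k))=\{f_\sigma:\sigma\in \mathrm{Sym}([n])\}\cong \mathrm{Sym}([n])$. If $n=2k+1$, then $\mathrm{Aut}(B(n,k))=\{f_\sigma\alpha^i:\sigma\in\mathrm{Sym}([n]),\ i\in\{0,1\}\}\cong \mathrm{Sym}([n])\times\mathbb{Z}_2$, where $\mathbb{Z}_2$ is the cyclic group of order $2$.
   Context: For integers $n\ge 4$ and $1\le k<\frac n2$, let $[n]=\{1,\dots,n\}$. The graph $B(n,k)$ has vertex set $V=\{v\subset[n] : |v|\in\{k,k+1\}\}$, and two vertices $v,w$ are adjacent iff $v\subset w$ or $w\subset v$. For $\sigma\in\mathrm{Sym}([n])$, $f_\sigma:V\to V$ is $f_\sigma(v)=\{\sigma(x):x\in v\}$. When $n=2k+1$, $\alpha:V\to V$ is the complementation map $\alpha(v)=[n]\setminus v$. *)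

theory Defs
  imports "HOL-Algebra.Sym_Groups" "HOL-Algebra.Elementary_Groups" "HOL-Algebra.Bij"
begin

definition Bverts :: "nat \<Rightarrow> nat \<Rightarrow> nat set set" where
  "Bverts n k = {v. v \<subseteq> {1..n} \<and> (card v = k \<or> card v = k + 1)}"

definition Badj :: "nat set \<Rightarrow> nat set \<Rightarrow> bool" where
  "Badj v w \<longleftrightarrow> v \<subset> w \<or> w \<subset> v"

definition Baut :: "nat \<Rightarrow> nat \<Rightarrow> (nat set \<Rightarrow> nat set) set" where
  "Baut n k = {f \<in> Bij (Bverts n k).
     \<forall>v\<in>Bverts n k. \<forall>w\<in>Bverts n k. Badj v w \<longleftrightarrow> Badj (f v) (f w)}"

definition Baut_group :: "nat \<Rightarrow> nat \<Rightarrow> (nat set \<Rightarrow> nat set) monoid" where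
  "Baut_group n k = (BijGroup (Bverts n k)) \<lparr>carrier := Baut n k\<rparr>"

definition fsig :: "nat \<Rightarrow> nat \<Rightarrow> (nat \<Rightarrow> nat) \<Rightarrow> nat set \<Rightarrow> nat set" where
  "fsig n k \<sigma> = restrict (\<lambda>v. \<sigma> ` v) (Bverts n k)"

definition Balpha :: "nat \<Rightarrow> nat \<Rightarrow> nat set \<Rightarrow> nat set" where
  "Balpha n k = restrict (\<lambda>v. {1..n} - v) (Bverts n k)"

end

theory Submission
  imports Defs
begin

text \<open>
  The degree of a \<open>k\<close>-set in \<open>B(n,k)\<close> is \<open>n - k\<close> and that of a \<open>(k+1)\<close>-set is \<open>k + 1\<close>, and
  the graph is connected and bipartite with these two levels as parts. So an automorphism either
  preserves both levels or swaps them, and swapping is only possible when \<open>n = 2k + 1\<close>, where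
  composing with the complementation \<open>\<alpha>\<close> turns it into a level-preserving one.
  A level-preserving automorphism \<open>f\<close> maps \<open>A \<subset> insert x A\<close> to \<open>f A \<subset> f (insert x A)\<close>, so it
  adds one point to \<open>f A\<close>; an exchange argument on \<open>k\<close>-sets shows that this point depends on
  \<open>x\<close> only, and the resulting map \<open>\<sigma>\<close> is a permutation with \<open>f = f\<^sub>\<sigma>\<close>.
\<close>

lemma card_eq_exchange_induct:
  assumes "finite U" "A \<subseteq> U" "B \<subseteq> U" "card A = card B" "P A"
    and exchange: "\<And>A a b. P A \<Longrightarrow> A \<subseteq> U \<Longrightarrow> card A = card B \<Longrightarrow> a \<in> A \<Longrightarrow> b \<in> U - A
      \<Longrightarrow> P (insert b (A - {a}))"
  shows "P B"
  using assms(2,4,5)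
proof (induction "card (A - B)" arbitrary: A rule: less_induct)
  case less
  have fin: "finite A" "finite B" using less.prems(1) assms(1,3) finite_subset by blast+
  show ?case
  proof (cases "A \<subseteq> B")
    case True
    then have "A = B" using less.prems(2) fin by (simp add: card_subset_eq)
    then show ?thesis using less.prems(3) by simp
  next
    case False
    then obtain a where a: "a \<in> A" "a \<notin> B" by blast
    have "\<not> B \<subseteq> A" using a less.prems(2) fin card_subset_eq by metis
    then obtain b where b: "b \<in> B" "b \<notin> A" by blast
    let ?A' = "insert b (A - {a})"
    have "P ?A'" using exchange[OF less.prems(3,1,2) a(1)] b assms(3) by blast
    moreover have "card ?A' = card B"
      using less.prems(2) a b fin by (simp add: card_Diff_singleton) (metis Suc_pred card_gt_0_iff empty_iff)
    moreover have "?A' \<subseteq> U" using less.prems(1) b assms(3) by blast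
    moreover have "card (?A' - B) < card (A - B)"
    proof -
      have "?A' - B = (A - B) - {a}" using b by blast
      then show ?thesis using a fin by (metis Diff_iff card_Diff1_less finite_Diff)
    qed
    ultimately show ?thesis using less.hyps by blast
  qed
qed

lemma Bverts_iff: "v \<in> Bverts n k \<longleftrightarrow> v \<subseteq> {1..n} \<and> (card v = k \<or> card v = k + 1)"
  by (simp add: Bverts_def)

lemma Bverts_finite: "v \<in> Bverts n k \<Longrightarrow> finite v"
  by (auto simp: Bverts_def intro: finite_subset)

lemma insert_in_Bverts:
  assumes "A \<subseteq> {1..n}" "card A = k" "x \<in> {1..n} - A"
  shows "insert x A \<in> Bverts n k" "card (insert x A) = k + 1"
proof -
  have "finite A" using assms(1) finite_subset by blast
  then show "card (insert x A) = k + 1" using assms by simp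
  then show "insert x A \<in> Bverts n k" using assms by (simp add: Bverts_iff)
qed

lemma remove_in_Bverts:
  assumes "v \<in> Bverts n k" "card v = k + 1" "x \<in> v"
  shows "v - {x} \<in> Bverts n k" "card (v - {x}) = k"
proof -
  show "card (v - {x}) = k" using assms Bverts_finite[OF assms(1)] by simp
  then show "v - {x} \<in> Bverts n k" using assms(1) by (auto simp: Bverts_iff)
qed

lemma Badj_iff_psubset: "finite v \<Longrightarrow> card v < card w \<Longrightarrow> Badj v w \<longleftrightarrow> v \<subset> w"
  unfolding Badj_def using psubset_card_mono by (metis less_asym)

lemma Badj_card_neq: "v \<in> Bverts n k \<Longrightarrow> w \<in> Bverts n k \<Longrightarrow> Badj v w \<Longrightarrow> card v \<noteq> card w"
  unfolding Badj_def using Bverts_finite psubset_card_mono by (metis less_irrefl)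

lemma Baut_mem_Bverts: "f \<in> Baut n k \<Longrightarrow> v \<in> Bverts n k \<Longrightarrow> f v \<in> Bverts n k"
  using Bij_imp_funcset by (fastforce simp: Baut_def)

lemma Baut_Badj_iff:
  "f \<in> Baut n k \<Longrightarrow> v \<in> Bverts n k \<Longrightarrow> w \<in> Bverts n k \<Longrightarrow> Badj (f v) (f w) \<longleftrightarrow> Badj v w"
  by (simp add: Baut_def)

lemma Baut_bij_betw: "f \<in> Baut n k \<Longrightarrow> bij_betw f (Bverts n k) (Bverts n k)"
  by (simp add: Baut_def Bij_def)

lemma Baut_extensional: "f \<in> Baut n k \<Longrightarrow> f \<in> extensional (Bverts n k)"
  by (simp add: Baut_def Bij_def)

lemma compose_Baut:
  assumes "f \<in> Baut n k" "g \<in> Baut n k"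
  shows "compose (Bverts n k) f g \<in> Baut n k"
  using assms compose_Bij[of f "Bverts n k" g] Baut_mem_Bverts[OF assms(2)]
  unfolding Baut_def by (auto simp: compose_def)

lemma fsig_apply: "v \<in> Bverts n k \<Longrightarrow> fsig n k \<sigma> v = \<sigma> ` v"
  by (simp add: fsig_def)

lemma permutes_image_Bverts:
  assumes \<sigma>: "\<sigma> permutes {1..n}" and v: "v \<in> Bverts n k"
  shows "\<sigma> ` v \<in> Bverts n k"
proof -
  have "\<sigma> ` v \<subseteq> {1..n}" using v permutes_image[OF \<sigma>] by (auto simp: Bverts_iff)
  moreover have "card (\<sigma> ` v) = card v" using permutes_inj[OF \<sigma>] by (simp add: card_image inj_on_subset)
  ultimately show ?thesis using v by (simp add: Bverts_iff)
qed

lemma fsig_Baut: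
  assumes \<sigma>: "\<sigma> permutes {1..n}"
  shows "fsig n k \<sigma> \<in> Baut n k"
proof -
  let ?V = "Bverts n k"
  have inj: "inj \<sigma>" using \<sigma> permutes_inj by blast
  have inv: "inv' \<sigma> permutes {1..n}" using \<sigma> permutes_inv by blast
  have "bij_betw (fsig n k \<sigma>) ?V ?V"
  proof (rule bij_betw_byWitness[where f' = "\<lambda>v. inv' \<sigma> ` v"])
    show "\<forall>v\<in>?V. inv' \<sigma> ` fsig n k \<sigma> v = v" using inj by (simp add: fsig_apply image_inv_f_f)
    show "\<forall>v\<in>?V. fsig n k \<sigma> (inv' \<sigma> ` v) = v"
      using \<sigma> inv by (simp add: fsig_apply permutes_image_Bverts image_f_inv_f permutes_surj)
    show "fsig n k \<sigma> ` ?V \<subseteq> ?V" using \<sigma> by (auto simp: fsig_apply permutes_image_Bverts)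
    show "(\<lambda>v. inv' \<sigma> ` v) ` ?V \<subseteq> ?V" using inv by (auto simp: permutes_image_Bverts)
  qed
  moreover have "\<forall>v\<in>?V. \<forall>w\<in>?V. Badj v w \<longleftrightarrow> Badj (fsig n k \<sigma> v) (fsig n k \<sigma> w)"
    using inj by (simp add: fsig_apply Badj_def psubset_eq inj_image_subset_iff inj_image_eq_iff)
  ultimately show ?thesis unfolding Baut_def Bij_def by (simp add: fsig_def)
qed

text \<open>A permutation of \<open>[n]\<close> is determined by its action on \<open>k\<close>-sets and \<open>(k+1)\<close>-sets:
  \<open>\<sigma> x\<close> is the one point of \<open>\<sigma> ` insert x A - \<sigma> ` A\<close>.\<close>
lemma permutes_eq_if_images_eq:
  assumes \<sigma>: "\<sigma> permutes {1..n}" and \<tau>: "\<tau> permutes {1..n}" and "k < n"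
    and eq: "\<And>v. v \<in> Bverts n k \<Longrightarrow> \<sigma> ` v = \<tau> ` v"
  shows "\<sigma> = \<tau>"
proof
  fix x
  show "\<sigma> x = \<tau> x"
  proof (cases "x \<in> {1..n}")
    case False
    then show ?thesis using \<sigma> \<tau> by (simp add: permutes_not_in)
  next
    case True
    have "k \<le> card ({1..n} - {x})" using True \<open>k < n\<close> by simp
    then obtain A where A: "A \<subseteq> {1..n} - {x}" "card A = k" by (meson obtain_subset_with_card_n)
    have "A \<in> Bverts n k" "insert x A \<in> Bverts n k"
      using A insert_in_Bverts[of A n k x] True by (auto simp: Bverts_iff)
    moreover have "\<sigma> ` insert x A - \<sigma> ` A = {\<sigma> x}" "\<tau> ` insert x A - \<tau> ` A = {\<tau> x}"
      using A permutes_inj[OF \<sigma>] permutes_inj[OF \<tau>] by (auto dest: injD)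
    ultimately show ?thesis using eq by (metis singleton_inject)
  qed
qed

lemma Balpha_apply: "v \<in> Bverts n k \<Longrightarrow> Balpha n k v = {1..n} - v"
  by (simp add: Balpha_def)

lemma complement_in_Bverts:
  assumes "n = 2 * k + 1" "v \<in> Bverts n k"
  shows "{1..n} - v \<in> Bverts n k"
proof -
  have v: "v \<subseteq> {1..n}" "card v = k \<or> card v = k + 1" using assms(2) by (simp_all add: Bverts_iff)
  then have "card ({1..n} - v) = n - card v" by (simp add: card_Diff_subset finite_subset)
  then show ?thesis using v assms(1) by (auto simp: Bverts_iff)
qed

lemma Badj_Diff_iff:
  assumes "v \<subseteq> S" "w \<subseteq> S"
  shows "Badj (S - v) (S - w) \<longleftrightarrow> Badj v w"
proof -
  have "S - v \<subset> S - w \<longleftrightarrow> w \<subset> v" if "v \<subseteq> S" "w \<subseteq> S" for v w using that by auto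
  then show ?thesis unfolding Badj_def using assms by blast
qed

lemma Balpha_Baut:
  assumes n: "n = 2 * k + 1"
  shows "Balpha n k \<in> Baut n k"
proof -
  let ?V = "Bverts n k"
  have invol: "\<forall>v\<in>?V. Balpha n k (Balpha n k v) = v"
    using complement_in_Bverts[OF n] by (simp add: Balpha_apply Bverts_iff double_diff)
  have "bij_betw (Balpha n k) ?V ?V"
    by (rule bij_betw_byWitness[where f' = "Balpha n k"])
       (use invol complement_in_Bverts[OF n] in \<open>auto simp: Balpha_apply\<close>)
  moreover have "\<forall>v\<in>?V. \<forall>w\<in>?V. Badj v w \<longleftrightarrow> Badj (Balpha n k v) (Balpha n k w)"
    by (simp add: Balpha_apply Badj_Diff_iff Bverts_iff)
  ultimately show ?thesis unfolding Baut_def Bij_def by (simp add: Balpha_def)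
qed

definition Bneighbours :: "nat \<Rightarrow> nat \<Rightarrow> nat set \<Rightarrow> nat set set" where
  "Bneighbours n k v = {w \<in> Bverts n k. Badj v w}"

lemma card_Bneighbours_lower:
  assumes v: "v \<in> Bverts n k" "card v = k"
  shows "card (Bneighbours n k v) = n - k"
proof -
  have vN: "v \<subseteq> {1..n}" using v by (simp add: Bverts_iff)
  have fin: "finite v" using Bverts_finite[OF v(1)] .
  have "Bneighbours n k v = (\<lambda>x. insert x v) ` ({1..n} - v)"
  proof (intro equalityI subsetI)
    fix w assume "w \<in> Bneighbours n k v"
    then have w: "w \<in> Bverts n k" "Badj v w" by (auto simp: Bneighbours_def)
    then have "card w = k + 1" using Badj_card_neq[OF v(1) w(1) w(2)] w(1) v by (auto simp: Bverts_iff)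
    moreover have "v \<subset> w" using w fin v calculation Badj_iff_psubset by simp
    ultimately have "card (w - v) = 1" using v fin by (simp add: card_Diff_subset psubset_imp_subset)
    then obtain x where "w - v = {x}" by (rule card_1_singletonE)
    then have "w = insert x v" "x \<in> {1..n} - v" using \<open>v \<subset> w\<close> w(1) by (auto simp: Bverts_iff)
    then show "w \<in> (\<lambda>x. insert x v) ` ({1..n} - v)" by blast
  next
    fix w assume "w \<in> (\<lambda>x. insert x v) ` ({1..n} - v)"
    then obtain x where "x \<in> {1..n} - v" "w = insert x v" by blast
    then show "w \<in> Bneighbours n k v"
      using insert_in_Bverts[OF vN v(2)] by (auto simp: Bneighbours_def Badj_def)
  qed
  moreover have "inj_on (\<lambda>x. insert x v) ({1..n} - v)" by (rule inj_onI) blast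
  ultimately show ?thesis using vN fin v(2) by (simp add: card_image card_Diff_subset)
qed

lemma card_Bneighbours_upper:
  assumes v: "v \<in> Bverts n k" "card v = k + 1"
  shows "card (Bneighbours n k v) = k + 1"
proof -
  have fin: "finite v" using Bverts_finite[OF v(1)] .
  have "Bneighbours n k v = (\<lambda>x. v - {x}) ` v"
  proof (intro equalityI subsetI)
    fix w assume "w \<in> Bneighbours n k v"
    then have w: "w \<in> Bverts n k" "Badj w v" by (auto simp: Bneighbours_def Badj_def)
    then have "card w = k" using Badj_card_neq[OF w(1) v(1) w(2)] w(1) v by (auto simp: Bverts_iff)
    moreover have "w \<subset> v" using w Bverts_finite[OF w(1)] Badj_iff_psubset v calculation by simp
    ultimately have "card (v - w) = 1" using v Bverts_finite[OF w(1)]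
      by (simp add: card_Diff_subset psubset_imp_subset)
    then obtain x where "v - w = {x}" by (rule card_1_singletonE)
    then have "w = v - {x}" "x \<in> v" using \<open>w \<subset> v\<close> by auto
    then show "w \<in> (\<lambda>x. v - {x}) ` v" by blast
  next
    fix w assume "w \<in> (\<lambda>x. v - {x}) ` v"
    then obtain x where "x \<in> v" "w = v - {x}" by blast
    then show "w \<in> Bneighbours n k v"
      using remove_in_Bverts[OF v] by (auto simp: Bneighbours_def Badj_def)
  qed
  moreover have "inj_on (\<lambda>x. v - {x}) v" by (rule inj_onI) blast
  ultimately show ?thesis using v(2) by (simp add: card_image)
qed

lemma Baut_image_Bneighbours:
  assumes f: "f \<in> Baut n k" and v: "v \<in> Bverts n k"
  shows "f ` Bneighbours n k v = Bneighbours n k (f v)"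
proof -
  have onto: "f ` Bverts n k = Bverts n k" using Baut_bij_betw[OF f] by (simp add: bij_betw_def)
  show ?thesis
  proof (intro equalityI subsetI)
    fix y assume "y \<in> f ` Bneighbours n k v"
    then obtain w where "w \<in> Bverts n k" "Badj v w" "y = f w" by (auto simp: Bneighbours_def)
    then show "y \<in> Bneighbours n k (f v)"
      using Baut_Badj_iff[OF f v] Baut_mem_Bverts[OF f] by (simp add: Bneighbours_def)
  next
    fix y assume y: "y \<in> Bneighbours n k (f v)"
    then obtain w where "w \<in> Bverts n k" "y = f w" using onto by (auto simp: Bneighbours_def)
    then show "y \<in> f ` Bneighbours n k v"
      using y Baut_Badj_iff[OF f v] by (auto simp: Bneighbours_def)
  qed
qed

lemma Baut_card_Bneighbours:
  assumes f: "f \<in> Baut n k" and v: "v \<in> Bverts n k"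
  shows "card (Bneighbours n k (f v)) = card (Bneighbours n k v)"
proof -
  have "inj_on f (Bneighbours n k v)"
    using Baut_bij_betw[OF f] inj_on_subset[of f "Bverts n k"]
    by (simp add: bij_betw_def Bneighbours_def)
  then show ?thesis using Baut_image_Bneighbours[OF f v] card_image by metis
qed

lemma Baut_preserves_card:
  assumes f: "f \<in> Baut n k" and "n \<noteq> 2 * k + 1" "2 * k < n" and v: "v \<in> Bverts n k"
  shows "card (f v) = card v"
proof -
  have "f v \<in> Bverts n k" using Baut_mem_Bverts[OF f v] .
  then show ?thesis
    using assms Baut_card_Bneighbours[OF f v] card_Bneighbours_lower card_Bneighbours_upper
    by (auto simp: Bverts_iff)
qed

text \<open>\<open>B(n,k)\<close> is connected: every \<open>(k+1)\<close>-set is adjacent to a \<open>k\<close>-set, and two \<open>k\<close>-sets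
  differing by one exchange have a common \<open>(k+1)\<close>-set neighbour.\<close>
lemma Badj_invariant_const:
  assumes inv: "\<And>u w. u \<in> Bverts n k \<Longrightarrow> w \<in> Bverts n k \<Longrightarrow> Badj u w \<Longrightarrow> P u = P w"
    and u: "u \<in> Bverts n k" and w: "w \<in> Bverts n k"
  shows "P u = P w"
proof -
  have lower: "P A = P B" if A: "A \<subseteq> {1..n}" "card A = k" and B: "B \<subseteq> {1..n}" "card B = k" for A B
  proof -
    have "P B = P A"
    proof (rule card_eq_exchange_induct[of "{1..n}" A B "\<lambda>B. P B = P A"])
      fix A' a b assume A': "P A' = P A" "A' \<subseteq> {1..n}" "card A' = card B"
        and ab: "a \<in> A'" "b \<in> {1..n} - A'"
      have "A' \<in> Bverts n k" using A' B by (simp add: Bverts_iff)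
      moreover note L = insert_in_Bverts[of A' n k b]
      moreover have "insert b (A' - {a}) = insert b A' - {a}" using ab by blast
      then have "insert b (A' - {a}) \<in> Bverts n k"
        using remove_in_Bverts[of "insert b A'" n k a] L A' B ab by simp
      moreover have "Badj A' (insert b A')" "Badj (insert b (A' - {a})) (insert b A')"
        using ab by (auto simp: Badj_def)
      ultimately show "P (insert b (A' - {a})) = P A" using inv A' B ab by metis
    qed (use A B in auto)
    then show ?thesis by simp
  qed
  have "\<exists>A. A \<subseteq> {1..n} \<and> card A = k \<and> P v = P A" if v: "v \<in> Bverts n k" for v
  proof (cases "card v = k")
    case True
    then show ?thesis using v by (auto simp: Bverts_iff)
  next
    case False
    then have "card v = k + 1" using v by (simp add: Bverts_iff)
    then obtain x where "x \<in> v" by fastforce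
    then have "v - {x} \<in> Bverts n k" "card (v - {x}) = k" "Badj (v - {x}) v"
      using remove_in_Bverts[OF v \<open>card v = k + 1\<close>] by (auto simp: Badj_def)
    then show ?thesis using inv[OF _ v] by (metis Bverts_iff)
  qed
  then show ?thesis using u w lower by metis
qed

lemma Baut_card_uniform:
  assumes f: "f \<in> Baut n k"
  shows "(\<forall>v\<in>Bverts n k. card (f v) = card v) \<or> (\<forall>v\<in>Bverts n k. card (f v) \<noteq> card v)"
proof -
  have "(card (f u) = card u) = (card (f w) = card w)"
    if u: "u \<in> Bverts n k" and w: "w \<in> Bverts n k" and "Badj u w" for u w
  proof -
    have "card u \<noteq> card w" "card (f u) \<noteq> card (f w)"
      using Badj_card_neq Baut_Badj_iff[OF f u w] Baut_mem_Bverts[OF f] u w \<open>Badj u w\<close> by blast+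
    moreover have "card u = k \<or> card u = k + 1" "card w = k \<or> card w = k + 1"
      "card (f u) = k \<or> card (f u) = k + 1" "card (f w) = k \<or> card (f w) = k + 1"
      using u w Baut_mem_Bverts[OF f u] Baut_mem_Bverts[OF f w] by (simp_all add: Bverts_iff)
    ultimately show ?thesis by arith
  qed
  then have "(card (f u) = card u) = (card (f w) = card w)"
    if "u \<in> Bverts n k" "w \<in> Bverts n k" for u w
    using Badj_invariant_const[of n k "\<lambda>v. card (f v) = card v", OF _ that] by blast
  then show ?thesis by blast
qed

locale level_preserving_Baut =
  fixes n k :: nat and f :: "nat set \<Rightarrow> nat set"
  assumes aut: "f \<in> Baut n k"
    and level: "\<And>v. v \<in> Bverts n k \<Longrightarrow> card (f v) = card v"
    and k_pos: "1 \<le> k" and k_le: "k + 2 \<le> n"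
begin

lemma f_psubset_iff:
  assumes A: "A \<subseteq> {1..n}" "card A = k" and L: "L \<subseteq> {1..n}" "card L = k + 1"
  shows "f A \<subset> f L \<longleftrightarrow> A \<subset> L"
proof -
  have V: "A \<in> Bverts n k" "L \<in> Bverts n k" using A L by (simp_all add: Bverts_iff)
  have "f A \<subset> f L \<longleftrightarrow> Badj (f A) (f L)"
    using Badj_iff_psubset Bverts_finite[OF Baut_mem_Bverts[OF aut V(1)]] level V A L by simp
  also have "\<dots> \<longleftrightarrow> Badj A L" using Baut_Badj_iff[OF aut V] .
  also have "\<dots> \<longleftrightarrow> A \<subset> L" using Badj_iff_psubset Bverts_finite[OF V(1)] A L by simp
  finally show ?thesis .
qed

definition added :: "nat set \<Rightarrow> nat \<Rightarrow> nat" where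
  "added A x = the_elem (f (insert x A) - f A)"

lemma f_insert:
  assumes x: "x \<in> {1..n}" and A: "A \<subseteq> {1..n} - {x}" "card A = k"
  shows "f (insert x A) = insert (added A x) (f A)" "added A x \<notin> f A"
proof -
  have AN: "A \<subseteq> {1..n}" and xA: "x \<in> {1..n} - A" using A x by auto
  note L = insert_in_Bverts[OF AN A(2) xA]
  have AV: "A \<in> Bverts n k" using AN A by (simp add: Bverts_iff)
  have sub: "f A \<subset> f (insert x A)"
    using f_psubset_iff[OF AN A(2) _ L(2)] AN xA by blast
  moreover have "card (f (insert x A) - f A) = 1"
    using sub level[OF AV] level[OF L(1)] L(2) A(2) Bverts_finite[OF Baut_mem_Bverts[OF aut AV]]
    by (simp add: card_Diff_subset psubset_imp_subset)
  then obtain y where "f (insert x A) - f A = {y}" by (rule card_1_singletonE)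
  ultimately show "f (insert x A) = insert (added A x) (f A)" "added A x \<notin> f A"
    unfolding added_def by auto
qed

text \<open>The key step: the image of \<open>insert x C\<close> lies in both \<open>f (insert x (insert a C))\<close> and
  \<open>f (insert x (insert b C))\<close>, but not in \<open>f (insert b (insert a C))\<close>, which contains
  \<open>f (insert a C) \<union> f (insert b C)\<close>; so some point of it is added on both sides.\<close>
lemma added_exchange:
  assumes C: "C \<subseteq> {1..n}" "card C = k - 1"
    and abx: "a \<in> {1..n} - C" "b \<in> {1..n} - C" "x \<in> {1..n} - C" "a \<noteq> b" "a \<noteq> x" "b \<noteq> x"
  shows "added (insert a C) x = added (insert b C) x"
proof -
  have fin: "finite C" using C(1) finite_subset by blast
  have card_k: "card (insert y C) = k" if "y \<in> {1..n} - C" for y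
    using that C(2) fin k_pos by simp
  have card_k1: "card (insert y (insert z C)) = k + 1" if "y \<in> {1..n} - C" "z \<in> {1..n} - C" "y \<noteq> z" for y z
    using that card_k[OF that(2)] fin by simp
  have sub: "f (insert z C) \<subset> f (insert y (insert z C))"
    if "y \<in> {1..n} - C" "z \<in> {1..n} - C" "y \<noteq> z" for y z
    using f_psubset_iff card_k card_k1 that C(1) by auto
  let ?R = "f (insert x C)"
  have "?R \<subseteq> insert (added (insert y C) x) (f (insert y C))"
    if "y \<in> {1..n} - C" "y \<noteq> x" for y
  proof -
    have "?R \<subseteq> f (insert x (insert y C))"
      using sub[of y x] that abx insert_commute[of x y C] by auto
    also have "\<dots> = insert (added (insert y C) x) (f (insert y C))"
      using f_insert[of x "insert y C"] card_k that abx C(1) by auto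
    finally show ?thesis .
  qed
  moreover have "\<not> ?R \<subseteq> f (insert a C) \<union> f (insert b C)"
  proof
    let ?F = "f (insert b (insert a C))"
    assume "?R \<subseteq> f (insert a C) \<union> f (insert b C)"
    moreover have "f (insert a C) \<union> f (insert b C) \<subseteq> ?F"
      using sub[of b a] sub[of a b] abx insert_commute[of a b C] by auto
    ultimately have "?R \<subseteq> ?F" by blast
    have "insert x C \<in> Bverts n k" "insert b (insert a C) \<in> Bverts n k"
      using card_k[of x] card_k1[of b a] abx C(1) by (simp_all add: Bverts_iff)
    then have "card ?R \<noteq> card ?F" using level card_k[of x] card_k1[of b a] abx by simp
    with \<open>?R \<subseteq> ?F\<close> have "?R \<subset> ?F" by (metis psubsetI)
    then have "insert x C \<subset> insert b (insert a C)"
      using f_psubset_iff card_k card_k1 abx C(1) by simp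
    then show False using abx by blast
  qed
  ultimately show ?thesis using abx by blast
qed

lemma added_independent:
  assumes x: "x \<in> {1..n}" and A: "A \<subseteq> {1..n} - {x}" "card A = k"
    and B: "B \<subseteq> {1..n} - {x}" "card B = k"
  shows "added A x = added B x"
proof -
  have "added B x = added A x"
  proof (rule card_eq_exchange_induct[of "{1..n} - {x}" A B "\<lambda>B. added B x = added A x"])
    fix A' a b assume A': "added A' x = added A x" "A' \<subseteq> {1..n} - {x}" "card A' = card B"
      and ab: "a \<in> A'" "b \<in> {1..n} - {x} - A'"
    have fin: "finite A'" using A'(2) finite_subset by blast
    have "added (insert a (A' - {a})) x = added (insert b (A' - {a})) x"
      by (rule added_exchange) (use A' ab B fin x in auto)
    then show "added (insert b (A' - {a})) x = added A x" using A'(1) ab by (simp add: insert_absorb)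
  qed (use A B in auto)
  then show ?thesis by simp
qed

definition induced_perm :: "nat \<Rightarrow> nat" where
  "induced_perm x =
     (if x \<in> {1..n} then added (SOME A. A \<subseteq> {1..n} - {x} \<and> card A = k) x else x)"

lemma f_insert_induced_perm:
  assumes x: "x \<in> {1..n}" and A: "A \<subseteq> {1..n} - {x}" "card A = k"
  shows "f (insert x A) = insert (induced_perm x) (f A)" "induced_perm x \<notin> f A"
proof -
  let ?A0 = "SOME A. A \<subseteq> {1..n} - {x} \<and> card A = k"
  have "?A0 \<subseteq> {1..n} - {x} \<and> card ?A0 = k" by (rule someI[of _ A]) (use A in blast)
  then have "added ?A0 x = added A x" using added_independent[OF x A] by metis
  then have "induced_perm x = added A x" using x by (simp add: induced_perm_def)
  then show "f (insert x A) = insert (induced_perm x) (f A)" "induced_perm x \<notin> f A"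
    using f_insert[OF x A] by simp_all
qed

lemma induced_perm_permutes: "induced_perm permutes {1..n}"
proof (rule bij_imp_permutes)
  have into: "induced_perm x \<in> {1..n}" if x: "x \<in> {1..n}" for x
  proof -
    have "k \<le> card ({1..n} - {x})" using x k_le by simp
    then obtain A where A: "A \<subseteq> {1..n} - {x}" "card A = k" by (meson obtain_subset_with_card_n)
    then have "insert x A \<in> Bverts n k" using insert_in_Bverts[of A n k x] x by auto
    then have "f (insert x A) \<subseteq> {1..n}" using Baut_mem_Bverts[OF aut] by (simp add: Bverts_iff)
    then show ?thesis using f_insert_induced_perm(1)[OF x A] by blast
  qed
  have "inj_on induced_perm {1..n}"
  proof (rule inj_onI, rule ccontr)
    fix x y assume x: "x \<in> {1..n}" and y: "y \<in> {1..n}" and eq: "induced_perm x = induced_perm y"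
      and "x \<noteq> y"
    then have "k \<le> card ({1..n} - {x, y})" using k_le by (simp add: card_Diff_subset)
    then obtain A where A: "A \<subseteq> {1..n} - {x, y}" "card A = k" by (meson obtain_subset_with_card_n)
    then have "A \<subseteq> {1..n} - {x}" "A \<subseteq> {1..n} - {y}" by auto
    then have "f (insert x A) = f (insert y A)"
      using f_insert_induced_perm(1)[OF x _ A(2)] f_insert_induced_perm(1)[OF y _ A(2)] eq by simp
    moreover have "insert x A \<in> Bverts n k" "insert y A \<in> Bverts n k"
      using insert_in_Bverts[of A n k] A x y by auto
    ultimately have "insert x A = insert y A"
      using Baut_bij_betw[OF aut] by (auto simp: bij_betw_def dest: inj_onD)
    then show False using A \<open>x \<noteq> y\<close> by blast
  qed
  moreover have "induced_perm ` {1..n} \<subseteq> {1..n}" using into by blast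
  ultimately show "bij_betw induced_perm {1..n} {1..n}"
    by (simp add: bij_betw_def endo_inj_surj)
  show "induced_perm x = x" if "x \<notin> {1..n}" for x using that unfolding induced_perm_def by argo
qed

lemma f_eq_image_lower:
  assumes A: "A \<subseteq> {1..n}" "card A = k"
  shows "f A = induced_perm ` A"
proof -
  have fin: "finite A" using A finite_subset by blast
  have AV: "A \<in> Bverts n k" using A by (simp add: Bverts_iff)
  have "A \<noteq> {1..n}" using A k_le by auto
  then obtain x where x: "x \<in> {1..n} - A" using A(1) by blast
  have "induced_perm y \<in> f A" if y: "y \<in> A" for y
  proof -
    let ?A' = "insert x (A - {y})"
    have A': "?A' \<subseteq> {1..n} - {y}" "card ?A' = k" using A x y fin k_pos by (auto simp: card_Diff_singleton)
    have "insert y ?A' = insert x A" using x y by blast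
    moreover have "y \<in> {1..n}" using y A by blast
    ultimately have "induced_perm y \<in> f (insert x A)" using f_insert_induced_perm(1)[OF _ A'] by auto
    moreover have "induced_perm y \<noteq> induced_perm x"
      using permutes_inj[OF induced_perm_permutes] x y by (auto dest: injD)
    ultimately show ?thesis using f_insert_induced_perm(1)[of x A] x A by auto
  qed
  moreover have "card (induced_perm ` A) = card (f A)"
    using level[OF AV] permutes_inj[OF induced_perm_permutes] by (simp add: card_image inj_on_subset)
  ultimately show ?thesis using card_subset_eq Bverts_finite[OF Baut_mem_Bverts[OF aut AV]] by (metis image_subsetI)
qed

lemma f_eq_fsig: "f = fsig n k induced_perm"
proof
  fix v
  show "f v = fsig n k induced_perm v"
  proof (cases "v \<in> Bverts n k")
    case False
    then show ?thesis using Baut_extensional[OF aut] by (simp add: fsig_def extensional_def)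
  next
    case v: True
    show ?thesis
    proof (cases "card v = k")
      case True
      then show ?thesis using v f_eq_image_lower by (simp add: fsig_apply Bverts_iff)
    next
      case False
      then have "card v = k + 1" using v by (simp add: Bverts_iff)
      then obtain x where x: "x \<in> v" by fastforce
      note lower = remove_in_Bverts[OF v \<open>card v = k + 1\<close> x]
      have xN: "x \<in> {1..n}" and sub: "v - {x} \<subseteq> {1..n} - {x}" using v x by (auto simp: Bverts_iff)
      have "f v = f (insert x (v - {x}))" using x by (simp add: insert_absorb)
      also have "\<dots> = insert (induced_perm x) (f (v - {x}))"
        by (rule f_insert_induced_perm(1)[OF xN sub lower(2)])
      also have "\<dots> = insert (induced_perm x) (induced_perm ` (v - {x}))"
        using f_eq_image_lower[OF _ lower(2)] sub by auto
      also have "\<dots> = induced_perm ` v" using x by blast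
      finally show ?thesis using v by (simp add: fsig_apply)
    qed
  qed
qed

end

lemma level_preserving_Baut_eq_fsig:
  assumes "f \<in> Baut n k" "\<And>v. v \<in> Bverts n k \<Longrightarrow> card (f v) = card v" "1 \<le> k" "k + 2 \<le> n"
  shows "\<exists>\<sigma>. \<sigma> permutes {1..n} \<and> f = fsig n k \<sigma>"
proof -
  interpret level_preserving_Baut n k f using assms by unfold_locales
  show ?thesis using induced_perm_permutes f_eq_fsig by blast
qed

text \<open>\<open>fsig_alpha n k \<sigma> c\<close> is \<open>f\<^sub>\<sigma> \<alpha>\<^sup>c\<close>, with the power of \<open>\<alpha>\<close> encoded as a boolean.\<close>
definition fsig_alpha :: "nat \<Rightarrow> nat \<Rightarrow> (nat \<Rightarrow> nat) \<Rightarrow> bool \<Rightarrow> nat set \<Rightarrow> nat set" where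
  "fsig_alpha n k \<sigma> c = restrict (\<lambda>v. \<sigma> ` (if c then {1..n} - v else v)) (Bverts n k)"

lemma fsig_alpha_False: "fsig_alpha n k \<sigma> False = fsig n k \<sigma>"
  by (simp add: fsig_alpha_def fsig_def)

lemma compose_fsig_Balpha_pow:
  assumes "n = 2 * k + 1" "i \<in> {0, 1}"
  shows "compose (Bverts n k) (fsig n k \<sigma>) (Balpha n k ^^ i) = fsig_alpha n k \<sigma> (i = 1)"
proof
  fix v
  show "compose (Bverts n k) (fsig n k \<sigma>) (Balpha n k ^^ i) v = fsig_alpha n k \<sigma> (i = 1) v"
    using assms complement_in_Bverts[OF assms(1), of v]
    by (auto simp: compose_def fsig_alpha_def fsig_apply Balpha_apply)
qed

lemma permutes_image_Diff: "\<sigma> permutes S \<Longrightarrow> \<sigma> ` (S - v) = S - \<sigma> ` v"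
  by (metis image_set_diff permutes_image permutes_inj)

lemma compose_fsig_alpha:
  assumes \<tau>: "\<tau> permutes {1..n}" and c: "c \<Longrightarrow> n = 2 * k + 1"
  shows "compose (Bverts n k) (fsig_alpha n k \<sigma> b) (fsig_alpha n k \<tau> c) = fsig_alpha n k (\<sigma> \<circ> \<tau>) (b \<noteq> c)"
proof
  fix v
  show "compose (Bverts n k) (fsig_alpha n k \<sigma> b) (fsig_alpha n k \<tau> c) v = fsig_alpha n k (\<sigma> \<circ> \<tau>) (b \<noteq> c) v"
  proof (cases "v \<in> Bverts n k")
    case False
    then show ?thesis by (simp add: compose_def fsig_alpha_def)
  next
    case v: True
    let ?w = "if c then {1..n} - v else v"
    have "?w \<in> Bverts n k" using v c complement_in_Bverts by auto
    then have "\<tau> ` ?w \<in> Bverts n k" using permutes_image_Bverts[OF \<tau>] by blast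
    then have "compose (Bverts n k) (fsig_alpha n k \<sigma> b) (fsig_alpha n k \<tau> c) v
        = \<sigma> ` (if b then {1..n} - \<tau> ` ?w else \<tau> ` ?w)"
      using v by (simp add: compose_def fsig_alpha_def)
    also have "(if b then {1..n} - \<tau> ` ?w else \<tau> ` ?w) = \<tau> ` (if b \<noteq> c then {1..n} - v else v)"
      using v permutes_image_Diff[OF \<tau>] by (auto simp: double_diff Bverts_iff)
    finally show ?thesis using v by (simp only: fsig_alpha_def restrict_apply' image_comp)
  qed
qed

lemma fsig_alpha_Baut:
  assumes \<sigma>: "\<sigma> permutes {1..n}" and c: "c \<Longrightarrow> n = 2 * k + 1"
  shows "fsig_alpha n k \<sigma> c \<in> Baut n k"
proof (cases c)
  case True
  then have "fsig_alpha n k \<sigma> c = compose (Bverts n k) (fsig n k \<sigma>) (Balpha n k)"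
    using compose_fsig_Balpha_pow[of n k 1] c by simp
  then show ?thesis using compose_Baut fsig_Baut[OF \<sigma>] Balpha_Baut c True by metis
next
  case False
  then show ?thesis using fsig_Baut[OF \<sigma>] by (simp add: fsig_alpha_False)
qed

lemma fsig_alpha_inj:
  assumes \<sigma>: "\<sigma> permutes {1..n}" and \<tau>: "\<tau> permutes {1..n}" and "2 * k < n"
    and b: "b \<Longrightarrow> n = 2 * k + 1" and c: "c \<Longrightarrow> n = 2 * k + 1"
    and eq: "fsig_alpha n k \<sigma> b = fsig_alpha n k \<tau> c"
  shows "\<sigma> = \<tau> \<and> b = c"
proof
  have "{1..k} \<in> Bverts n k" using \<open>2 * k < n\<close> by (simp add: Bverts_iff)
  moreover have "card (fsig_alpha n k \<rho> d {1..k}) = (if d then n - k else k)"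
    if "\<rho> permutes {1..n}" for \<rho> d
    using calculation permutes_inj[OF that] \<open>2 * k < n\<close>
    by (simp add: fsig_alpha_def card_image inj_on_subset card_Diff_subset)
  ultimately have "(if b then n - k else k) = (if c then n - k else k)" using eq \<sigma> \<tau> by metis
  then show bc: "b = c" using b c by (auto split: if_splits)
  show "\<sigma> = \<tau>"
  proof (rule permutes_eq_if_images_eq[OF \<sigma> \<tau>])
    show "k < n" using \<open>2 * k < n\<close> by simp
    fix v assume v: "v \<in> Bverts n k"
    let ?w = "if b then {1..n} - v else v"
    have "?w \<in> Bverts n k" "v \<subseteq> {1..n}" using v b complement_in_Bverts by (auto simp: Bverts_iff)
    moreover have "fsig_alpha n k \<sigma> b ?w = fsig_alpha n k \<tau> b ?w" using eq bc by simp
    ultimately show "\<sigma> ` v = \<tau> ` v" by (simp add: fsig_alpha_def double_diff split: if_splits)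
  qed
qed

lemma compose_Balpha_Balpha:
  assumes n: "n = 2 * k + 1" and f: "f \<in> extensional (Bverts n k)"
  shows "compose (Bverts n k) (compose (Bverts n k) f (Balpha n k)) (Balpha n k) = f"
proof
  fix v
  show "compose (Bverts n k) (compose (Bverts n k) f (Balpha n k)) (Balpha n k) v = f v"
  proof (cases "v \<in> Bverts n k")
    case True
    then have "{1..n} - v \<in> Bverts n k" "{1..n} - ({1..n} - v) = v"
      using complement_in_Bverts[OF n] by (auto simp: Bverts_iff)
    then show ?thesis using True by (simp add: compose_def Balpha_apply)
  next
    case False
    then show ?thesis using f by (simp add: compose_def extensional_def)
  qed
qed

text \<open>An automorphism swapping the two levels forces \<open>n = 2k + 1\<close>, since the levels have different
  degrees otherwise; composing it with \<open>\<alpha>\<close> then gives a level-preserving automorphism.\<close>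
lemma level_swapping_Baut_eq_fsig_alpha:
  assumes f: "f \<in> Baut n k" and swap: "\<And>v. v \<in> Bverts n k \<Longrightarrow> card (f v) \<noteq> card v"
    and "1 \<le> k" "2 * k < n"
  shows "n = 2 * k + 1 \<and> (\<exists>\<sigma>. \<sigma> permutes {1..n} \<and> f = fsig_alpha n k \<sigma> True)"
proof
  let ?V = "Bverts n k"
  have "{1..k} \<in> ?V" using assms by (simp add: Bverts_iff)
  then show n: "n = 2 * k + 1" using swap Baut_preserves_card[OF f _ assms(4)] by blast
  define g where "g = compose ?V f (Balpha n k)"
  have g: "g \<in> Baut n k" unfolding g_def using compose_Baut[OF f Balpha_Baut[OF n]] .
  have "card (g v) = card v" if v: "v \<in> ?V" for v
  proof -
    have w: "{1..n} - v \<in> ?V" using complement_in_Bverts[OF n v] .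
    have "card ({1..n} - v) = n - card v" using v Bverts_finite[OF v]
      by (simp add: Bverts_iff card_Diff_subset)
    moreover have "g v = f ({1..n} - v)" using v by (simp add: g_def compose_def Balpha_apply)
    moreover have "card (f ({1..n} - v)) \<noteq> card ({1..n} - v)" using swap w by blast
    moreover have "card v = k \<or> card v = k + 1"
      "card (f ({1..n} - v)) = k \<or> card (f ({1..n} - v)) = k + 1"
      using v Baut_mem_Bverts[OF f w] by (simp_all add: Bverts_iff)
    ultimately show ?thesis using n by auto
  qed
  moreover have "k + 2 \<le> n" using assms by simp
  ultimately obtain \<sigma> where \<sigma>: "\<sigma> permutes {1..n}" "g = fsig n k \<sigma>"
    using level_preserving_Baut_eq_fsig[OF g _ assms(3)] by blast
  have "f = compose ?V g (Balpha n k)"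
    unfolding g_def using compose_Balpha_Balpha[OF n Baut_extensional[OF f]] by simp
  also have "\<dots> = fsig_alpha n k \<sigma> True" using compose_fsig_Balpha_pow[OF n, of 1] \<sigma>(2) by simp
  finally show "\<exists>\<sigma>. \<sigma> permutes {1..n} \<and> f = fsig_alpha n k \<sigma> True" using \<sigma>(1) by blast
qed

lemma Baut_eq_fsig_alpha:
  assumes "1 \<le> k" "2 * k < n"
  shows "Baut n k = {fsig_alpha n k \<sigma> c | \<sigma> c. \<sigma> permutes {1..n} \<and> (c \<longrightarrow> n = 2 * k + 1)}"
proof (intro equalityI subsetI)
  fix f assume f: "f \<in> Baut n k"
  consider "\<forall>v\<in>Bverts n k. card (f v) = card v" | "\<forall>v\<in>Bverts n k. card (f v) \<noteq> card v"
    using Baut_card_uniform[OF f] by blast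
  then show "f \<in> {fsig_alpha n k \<sigma> c | \<sigma> c. \<sigma> permutes {1..n} \<and> (c \<longrightarrow> n = 2 * k + 1)}"
  proof cases
    case 1
    moreover have "k + 2 \<le> n" using assms by simp
    ultimately obtain \<sigma> where \<sigma>: "\<sigma> permutes {1..n}" "f = fsig n k \<sigma>"
      using level_preserving_Baut_eq_fsig[OF f _ assms(1)] by blast
    then have "f = fsig_alpha n k \<sigma> False" by (simp add: fsig_alpha_False)
    then show ?thesis using \<sigma>(1) by blast
  next
    case 2
    then show ?thesis using level_swapping_Baut_eq_fsig_alpha[OF f _ assms] by blast
  qed
next
  fix f assume "f \<in> {fsig_alpha n k \<sigma> c | \<sigma> c. \<sigma> permutes {1..n} \<and> (c \<longrightarrow> n = 2 * k + 1)}"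
  then show "f \<in> Baut n k" using fsig_alpha_Baut by blast
qed

lemma Baut_group_carrier: "carrier (Baut_group n k) = Baut n k"
  by (simp add: Baut_group_def)

lemma Baut_group_mult:
  "f \<in> Baut n k \<Longrightarrow> g \<in> Baut n k \<Longrightarrow> f \<otimes>\<^bsub>Baut_group n k\<^esub> g = compose (Bverts n k) f g"
  by (simp add: Baut_group_def BijGroup_def Baut_def)

lemma Baut_eq_fsig_image:
  assumes "1 \<le> k" "2 * k < n" "n \<noteq> 2 * k + 1"
  shows "Baut n k = {fsig n k \<sigma> | \<sigma>. \<sigma> permutes {1..n}}"
proof -
  have "Baut n k = {fsig_alpha n k \<sigma> False | \<sigma>. \<sigma> permutes {1..n}}"
    unfolding Baut_eq_fsig_alpha[OF assms(1,2)] using assms(3) by auto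
  then show ?thesis by (simp add: fsig_alpha_False)
qed

lemma Baut_group_iso_sym_group:
  assumes "1 \<le> k" "2 * k < n" "n \<noteq> 2 * k + 1"
  shows "Baut_group n k \<cong> sym_group n"
proof -
  have "fsig n k \<in> iso (sym_group n) (Baut_group n k)"
  proof (rule isoI)
    show "fsig n k \<in> hom (sym_group n) (Baut_group n k)"
      using compose_fsig_alpha[of _ n False k _ False]
      by (intro homI) (auto simp: sym_group_carrier Baut_group_carrier sym_group_mult fsig_Baut
          Baut_group_mult fsig_alpha_False permutes_compose)
    show "bij_betw (fsig n k) (carrier (sym_group n)) (carrier (Baut_group n k))"
      unfolding bij_betw_def
    proof
      show "inj_on (fsig n k) (carrier (sym_group n))"
        using fsig_alpha_inj[of _ n _ k False False] assms(2)
        by (intro inj_onI) (auto simp: sym_group_carrier fsig_alpha_False)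
      show "fsig n k ` carrier (sym_group n) = carrier (Baut_group n k)"
        using Baut_eq_fsig_image[OF assms] by (auto simp: sym_group_carrier Baut_group_carrier)
    qed
  qed
  then show ?thesis by (rule group.iso_sym[OF sym_group_is_group is_isoI])
qed

lemma Baut_eq_compose_fsig_Balpha_pow:
  assumes "1 \<le> k" "n = 2 * k + 1"
  shows "Baut n k = {compose (Bverts n k) (fsig n k \<sigma>) (Balpha n k ^^ i)
                      | \<sigma> i. \<sigma> permutes {1..n} \<and> i \<in> {0, 1::nat}}"
proof (intro equalityI subsetI)
  fix f assume "f \<in> Baut n k"
  then obtain \<sigma> c where \<sigma>: "\<sigma> permutes {1..n}" and f: "f = fsig_alpha n k \<sigma> c"
    using Baut_eq_fsig_alpha assms by auto
  let ?i = "if c then 1 else 0 :: nat"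
  have "f = compose (Bverts n k) (fsig n k \<sigma>) (Balpha n k ^^ ?i)"
    using compose_fsig_Balpha_pow[OF assms(2), of ?i] f by simp
  then show "f \<in> {compose (Bverts n k) (fsig n k \<sigma>) (Balpha n k ^^ i)
                      | \<sigma> i. \<sigma> permutes {1..n} \<and> i \<in> {0, 1::nat}}"
    using \<sigma> by (intro CollectI exI[of _ \<sigma>] exI[of _ ?i]) simp
next
  fix f assume "f \<in> {compose (Bverts n k) (fsig n k \<sigma>) (Balpha n k ^^ i)
                      | \<sigma> i. \<sigma> permutes {1..n} \<and> i \<in> {0, 1::nat}}"
  then obtain \<sigma> i where "\<sigma> permutes {1..n}" "i \<in> {0, 1::nat}"
    and "f = compose (Bverts n k) (fsig n k \<sigma>) (Balpha n k ^^ i)" by blast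
  then show "f \<in> Baut n k" using compose_fsig_Balpha_pow fsig_alpha_Baut assms(2) by simp
qed

lemma carrier_sym_group_times_Z2:
  "carrier (DirProd (sym_group n) (integer_mod_group 2)) = {\<sigma>. \<sigma> permutes {1..n}} \<times> {0, 1}"
  by (auto simp: DirProd_def sym_group_carrier carrier_integer_mod_group)

definition fsig_alpha_pair :: "nat \<Rightarrow> nat \<Rightarrow> (nat \<Rightarrow> nat) \<times> int \<Rightarrow> nat set \<Rightarrow> nat set" where
  "fsig_alpha_pair n k = (\<lambda>(\<sigma>, i). fsig_alpha n k \<sigma> (i \<noteq> 0))"

lemma fsig_alpha_pair_Baut:
  assumes "n = 2 * k + 1" "p \<in> carrier (DirProd (sym_group n) (integer_mod_group 2))"
  shows "fsig_alpha_pair n k p \<in> Baut n k"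
proof -
  obtain \<sigma> i where "p = (\<sigma>, i)" "\<sigma> permutes {1..n}"
    using assms(2) unfolding carrier_sym_group_times_Z2 by blast
  then show ?thesis using fsig_alpha_Baut[of \<sigma> n "i \<noteq> 0" k] assms(1) by (simp add: fsig_alpha_pair_def)
qed

lemma fsig_alpha_pair_hom:
  assumes n: "n = 2 * k + 1"
  shows "fsig_alpha_pair n k \<in> hom (DirProd (sym_group n) (integer_mod_group 2)) (Baut_group n k)"
proof (rule homI)
  let ?G = "DirProd (sym_group n) (integer_mod_group 2)"
  show "fsig_alpha_pair n k p \<in> carrier (Baut_group n k)" if "p \<in> carrier ?G" for p
    using fsig_alpha_pair_Baut[OF n that] by (simp add: Baut_group_carrier)
  fix p q assume "p \<in> carrier ?G" "q \<in> carrier ?G"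
  then obtain \<sigma> i \<tau> j where p: "p = (\<sigma>, i)" "\<sigma> permutes {1..n}" "i \<in> {0, 1}"
    and q: "q = (\<tau>, j)" "\<tau> permutes {1..n}" "j \<in> {0, 1}"
    unfolding carrier_sym_group_times_Z2 by blast
  have "((i + j) mod 2 \<noteq> 0) = ((i \<noteq> 0) \<noteq> (j \<noteq> 0))" using p(3) q(3) by auto
  then show "fsig_alpha_pair n k (p \<otimes>\<^bsub>?G\<^esub> q)
      = fsig_alpha_pair n k p \<otimes>\<^bsub>Baut_group n k\<^esub> fsig_alpha_pair n k q"
    using p q n
    by (simp add: fsig_alpha_pair_def DirProd_def sym_group_mult Baut_group_mult fsig_alpha_Baut
        compose_fsig_alpha)
qed

lemma fsig_alpha_pair_bij_betw:
  assumes "1 \<le> k" and n: "n = 2 * k + 1"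
  shows "bij_betw (fsig_alpha_pair n k)
    (carrier (DirProd (sym_group n) (integer_mod_group 2))) (carrier (Baut_group n k))"
  unfolding bij_betw_def
proof
  let ?G = "DirProd (sym_group n) (integer_mod_group 2)"
  show "inj_on (fsig_alpha_pair n k) (carrier ?G)"
  proof (rule inj_onI)
    fix p q assume "p \<in> carrier ?G" "q \<in> carrier ?G" and eq: "fsig_alpha_pair n k p = fsig_alpha_pair n k q"
    then obtain \<sigma> i \<tau> j where p: "p = (\<sigma>, i)" "\<sigma> permutes {1..n}" "i \<in> {0, 1}"
      and q: "q = (\<tau>, j)" "\<tau> permutes {1..n}" "j \<in> {0, 1}"
      unfolding carrier_sym_group_times_Z2 by blast
    then show "p = q"
      using fsig_alpha_inj[of \<sigma> n \<tau> k "i \<noteq> 0" "j \<noteq> 0"] eq n by (auto simp: fsig_alpha_pair_def)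
  qed
  show "fsig_alpha_pair n k ` carrier ?G = carrier (Baut_group n k)"
  proof (intro equalityI subsetI)
    fix f assume "f \<in> fsig_alpha_pair n k ` carrier ?G"
    then show "f \<in> carrier (Baut_group n k)"
      using fsig_alpha_pair_Baut[OF n] by (auto simp: Baut_group_carrier)
  next
    fix f assume "f \<in> carrier (Baut_group n k)"
    then obtain \<sigma> c where \<sigma>: "\<sigma> permutes {1..n}" and f: "f = fsig_alpha n k \<sigma> c"
      using Baut_eq_fsig_alpha[OF assms(1)] n by (auto simp: Baut_group_carrier)
    have "(\<sigma>, if c then 1 else 0) \<in> carrier ?G" using \<sigma> unfolding carrier_sym_group_times_Z2 by simp
    moreover have "f = fsig_alpha_pair n k (\<sigma>, if c then 1 else 0)" using f by (simp add: fsig_alpha_pair_def)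
    ultimately show "f \<in> fsig_alpha_pair n k ` carrier ?G" by (rule rev_image_eqI)
  qed
qed

lemma Baut_group_iso_sym_group_times_Z2:
  assumes "1 \<le> k" "n = 2 * k + 1"
  shows "Baut_group n k \<cong> DirProd (sym_group n) (integer_mod_group 2)"
proof -
  have "fsig_alpha_pair n k \<in> iso (DirProd (sym_group n) (integer_mod_group 2)) (Baut_group n k)"
    using fsig_alpha_pair_hom[OF assms(2)] fsig_alpha_pair_bij_betw[OF assms] by (rule isoI)
  then show ?thesis
    by (rule group.iso_sym[OF DirProd_group[OF sym_group_is_group group_integer_mod_group] is_isoI])
qed

theorem theorem3p10:
  fixes n k :: nat
  assumes "n \<ge> 4" and "1 \<le> k" and "2 * k < n"
  shows "(n \<noteq> 2 * k + 1 \<longrightarrow>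
            Baut n k = {fsig n k \<sigma> | \<sigma>. \<sigma> permutes {1..n}}
          \<and> Baut_group n k \<cong> sym_group n)
       \<and> (n = 2 * k + 1 \<longrightarrow>
            Baut n k = {compose (Bverts n k) (fsig n k \<sigma>) (((Balpha n k) ^^ i))
                          | \<sigma> i. \<sigma> permutes {1..n} \<and> i \<in> {0, 1::nat}}
          \<and> Baut_group n k \<cong> DirProd (sym_group n) (integer_mod_group 2))"
  using Baut_eq_fsig_image[OF assms(2,3)] Baut_group_iso_sym_group[OF assms(2,3)]
    Baut_eq_compose_fsig_Balpha_pow[OF assms(2)] Baut_group_iso_sym_group_times_Z2[OF assms(2)]
  by blast

end
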